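(* For all positive integers $m$ and $k$, the Kneser graph $\mathrm{KG}(m(2k+1),mk)$ (whose odd girth is $2k+1$) admits an orientation in which every cycle of length $2k+1$ is alternating.
   Context: The Kneser graph $\mathrm{KG}(n,k)$ ($n\ge 2k$) has as vertices all $k$-element subsets of $\{1,\dots,n\}$, two being adjacent iff disjoint. The odd girth is the length of a shortest odd cycle. An orientation assigns each edge exactly one direction. In an oriented graph, a subgraph that is a cycle is called alternating if at most one of its vertices has both positive in-degree and positive out-degree within that cycle. *)

theory Defs
  imports Main
begin

definition kneser_vertices :: "nat \<Rightarrow> nat \<Rightarrow> nat set set" where
  "kneser_vertices n k = {A. A \<subseteq> {1..n} \<and> card A = k}"

definition kneser_adj :: "nat \<Rightarrow> nat \<Rightarrow> nat set \<Rightarrow> nat set \<Rightarrow> bool" where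
  "kneser_adj n k A B \<longleftrightarrow> A \<in> kneser_vertices n k \<and> B \<in> kneser_vertices n k \<and> A \<inter> B = {}"

definition is_orientation :: "('a \<Rightarrow> 'a \<Rightarrow> bool) \<Rightarrow> ('a \<Rightarrow> 'a \<Rightarrow> bool) \<Rightarrow> bool" where
  "is_orientation adj D \<longleftrightarrow>
     (\<forall>u v. D u v \<longrightarrow> adj u v) \<and>
     (\<forall>u v. adj u v \<longrightarrow> (D u v \<or> D v u) \<and> \<not> (D u v \<and> D v u))"

text \<open>The cycle subgraph
  has the vertices of the list and the edges between cyclically consecutive ones.\<close>

definition is_cycle :: "('a \<Rightarrow> 'a \<Rightarrow> bool) \<Rightarrow> nat \<Rightarrow> 'a list \<Rightarrow> bool" where
  "is_cycle adj L c \<longleftrightarrow> L \<ge> 3 \<and> length c = L \<and> distinct c \<and>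
     (\<forall>i<L. adj (c ! i) (c ! ((i + 1) mod L)))"

definition cyc_has_in :: "('a \<Rightarrow> 'a \<Rightarrow> bool) \<Rightarrow> 'a list \<Rightarrow> nat \<Rightarrow> bool" where
  "cyc_has_in D c i \<longleftrightarrow>
     (let L = length c in D (c ! ((i + L - 1) mod L)) (c ! i) \<or> D (c ! ((i + 1) mod L)) (c ! i))"

definition cyc_has_out :: "('a \<Rightarrow> 'a \<Rightarrow> bool) \<Rightarrow> 'a list \<Rightarrow> nat \<Rightarrow> bool" where
  "cyc_has_out D c i \<longleftrightarrow>
     (let L = length c in D (c ! i) (c ! ((i + L - 1) mod L)) \<or> D (c ! i) (c ! ((i + 1) mod L)))"

definition alternating :: "('a \<Rightarrow> 'a \<Rightarrow> bool) \<Rightarrow> 'a list \<Rightarrow> bool" where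
  "alternating D c \<longleftrightarrow>
     card {i. i < length c \<and> cyc_has_in D c i \<and> cyc_has_out D c i} \<le> 1"

end

theory Submission
  imports Defs
begin

text \<open>Orient each edge {A, B} of the Kneser graph from the set containing min (A \<union> B).
  In a (2k+1)-cycle of KG(m(2k+1), mk) each ground element lies in at most k of the vertices,
  since these are pairwise non-consecutive, while the vertex sizes add up to (2k+1)mk = m(2k+1)k;
  so every element, in particular 1, lies in exactly k of them. The k vertices containing 1 are
  sources, pairwise non-consecutive, and hence meet all edges of the cycle but one. A vertex with
  both an in- and an out-arc sends its out-arc along an edge avoiding the sources, so it is the
  tail of that unique edge.\<close>

lemma cyclic_succ_pred:
  fixes i L :: nat
  assumes "i < L"
  shows "((i + L - 1) mod L + 1) mod L = i"
proof (cases i)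
  case (Suc j)
  then have "(i + L - 1) mod L = j" using assms by simp
  then show ?thesis using Suc assms by simp
qed (use assms in \<open>cases "L = 1"; simp\<close>)

lemma cyclic_pred_succ:
  fixes i L :: nat
  assumes "i < L"
  shows "((i + 1) mod L + L - 1) mod L = i"
  using assms by (cases "i + 1 = L") auto

text \<open>Edge e of the cycle on positions {..<L} joins e and (e + 1) mod L.\<close>

definition edges_avoiding :: "nat \<Rightarrow> nat set \<Rightarrow> nat set" where
  "edges_avoiding L S = {e. e < L \<and> e \<notin> S \<and> (e + 1) mod L \<notin> S}"

lemma card_edges_avoiding_independent:
  assumes "S \<subseteq> {..<L}" and indep: "\<forall>i\<in>S. (i + 1) mod L \<notin> S"
  shows "card (edges_avoiding L S) + 2 * card S = L"
proof -
  let ?succ = "\<lambda>i. (i + 1) mod L"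
  define P where "P = {e. e < L \<and> ?succ e \<in> S}"
  have "inj_on ?succ P"
    by (rule inj_on_inverseI[where g = "\<lambda>i. (i + L - 1) mod L"], rule cyclic_pred_succ)
      (simp add: P_def)
  moreover have "?succ ` P = S"
  proof
    show "S \<subseteq> ?succ ` P"
    proof
      fix t assume "t \<in> S"
      with assms(1) have "t < L" by auto
      then have "t = ?succ ((t + L - 1) mod L)" by (metis cyclic_succ_pred)
      with \<open>t \<in> S\<close> \<open>t < L\<close> show "t \<in> ?succ ` P" unfolding P_def by force
    qed
  qed (auto simp: P_def)
  ultimately have card_P: "card P = card S" by (metis card_image)
  have "{..<L} = edges_avoiding L S \<union> (S \<union> P)"
    using assms(1) by (auto simp: edges_avoiding_def P_def)
  moreover have "edges_avoiding L S \<inter> (S \<union> P) = {}" "S \<inter> P = {}"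
    using indep by (auto simp: edges_avoiding_def P_def)
  moreover have "finite S" "finite P" "finite (edges_avoiding L S)"
    using assms(1) finite_subset by (auto simp: P_def edges_avoiding_def)
  ultimately have "L = card (edges_avoiding L S) + (card S + card P)"
    by (metis card_Un_disjoint card_lessThan finite_Un)
  with card_P show ?thesis by simp
qed

lemma alternating_if_le_one_edge_avoids_sources:
  assumes len: "length c = L"
    and antisym: "\<forall>e<L. \<not> (D (c ! e) (c ! ((e + 1) mod L)) \<and> D (c ! ((e + 1) mod L)) (c ! e))"
    and sources: "\<forall>t\<in>S. \<forall>v. \<not> D v (c ! t)"
    and one_edge: "card (edges_avoiding L S) \<le> 1"
  shows "alternating D c"
proof -
  let ?succ = "\<lambda>i. (i + 1) mod L" and ?pred = "\<lambda>i. (i + L - 1) mod L"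
  define F where "F = edges_avoiding L S"
  define tail where "tail e = (if D (c ! e) (c ! ?succ e) then e else ?succ e)" for e
  define T where "T = {i. i < length c \<and> cyc_has_in D c i \<and> cyc_has_out D c i}"
  have "T \<subseteq> tail ` F"
  proof
    fix i assume "i \<in> T"
    then have "i < L" "i \<notin> S" "D (c ! i) (c ! ?pred i) \<or> D (c ! i) (c ! ?succ i)"
      using len sources by (auto simp: T_def cyc_has_in_def cyc_has_out_def Let_def)
    then consider
        (backward) e where "e \<in> F" "i = ?succ e" "D (c ! ?succ e) (c ! e)"
      | (forward) e where "e \<in> F" "i = e" "D (c ! e) (c ! ?succ e)"
    proof (elim disjE)
      assume arc: "D (c ! i) (c ! ?pred i)"
      have "?succ (?pred i) = i" using \<open>i < L\<close> by (rule cyclic_succ_pred)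
      then have "?pred i \<in> F" "i = ?succ (?pred i)"
        using \<open>i < L\<close> \<open>i \<notin> S\<close> sources arc by (auto simp: F_def edges_avoiding_def)
      with arc show thesis using that(1) by metis
    next
      assume arc: "D (c ! i) (c ! ?succ i)"
      have "i \<in> F"
        using \<open>i < L\<close> \<open>i \<notin> S\<close> sources arc by (auto simp: F_def edges_avoiding_def)
      with arc show thesis using that(2) by blast
    qed
    then show "i \<in> tail ` F"
    proof cases
      case backward
      with antisym have "tail e = i" by (auto simp: tail_def F_def edges_avoiding_def)
      with backward(1) show ?thesis by (metis imageI)
    next
      case forward
      then show ?thesis by (force simp: tail_def)
    qed
  qed
  moreover have "finite F" by (simp add: F_def edges_avoiding_def)
  ultimately have "card T \<le> card F" by (meson card_image_le card_mono finite_imageI le_trans)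
  with one_edge show ?thesis by (simp add: alternating_def T_def F_def)
qed

definition kneser_min_orientation :: "nat \<Rightarrow> nat \<Rightarrow> nat set \<Rightarrow> nat set \<Rightarrow> bool" where
  "kneser_min_orientation n r A B \<longleftrightarrow> kneser_adj n r A B \<and> Min (A \<union> B) \<in> A"

lemma kneser_adj_sym: "kneser_adj n r A B \<Longrightarrow> kneser_adj n r B A"
  unfolding kneser_adj_def by auto

lemma is_orientation_kneser_min_orientation:
  assumes "r \<ge> 1"
  shows "is_orientation (kneser_adj n r) (kneser_min_orientation n r)"
  unfolding is_orientation_def
proof (intro conjI allI impI)
  fix A B
  assume adj: "kneser_adj n r A B"
  then have "finite A" "finite B" "A \<noteq> {}" "A \<inter> B = {}"
    using assms unfolding kneser_adj_def kneser_vertices_def by (auto intro: finite_subset)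
  then have "Min (A \<union> B) \<in> A \<union> B" by (intro Min_in) auto
  with adj kneser_adj_sym[OF adj]
  show "kneser_min_orientation n r A B \<or> kneser_min_orientation n r B A"
    by (auto simp: kneser_min_orientation_def Un_commute)
  from \<open>A \<inter> B = {}\<close>
  show "\<not> (kneser_min_orientation n r A B \<and> kneser_min_orientation n r B A)"
    by (auto simp: kneser_min_orientation_def Un_commute)
qed (simp add: kneser_min_orientation_def)

lemma kneser_min_orientation_not_into_one:
  assumes "1 \<in> B"
  shows "\<not> kneser_min_orientation n r A B"
proof
  assume arc: "kneser_min_orientation n r A B"
  then have "A \<union> B \<subseteq> {1..n}" "A \<inter> B = {}"
    unfolding kneser_min_orientation_def kneser_adj_def kneser_vertices_def by auto
  with assms have "Min (A \<union> B) = 1" by (intro Min_eqI) (auto intro: finite_subset)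
  with arc \<open>A \<inter> B = {}\<close> assms show False by (auto simp: kneser_min_orientation_def)
qed

lemma kneser_cycle_vertex:
  assumes "is_cycle (kneser_adj n r) L c" "i < L"
  shows "c ! i \<subseteq> {1..n}" "card (c ! i) = r"
  using assms by (auto simp: is_cycle_def kneser_adj_def kneser_vertices_def)

lemma kneser_cycle_card_edges_avoiding:
  assumes "is_cycle (kneser_adj n r) L c"
  shows "card (edges_avoiding L {i. i < L \<and> x \<in> c ! i}) + 2 * card {i. i < L \<and> x \<in> c ! i} = L"
proof (rule card_edges_avoiding_independent)
  show "\<forall>i\<in>{i. i < L \<and> x \<in> c ! i}. (i + 1) mod L \<notin> {i. i < L \<and> x \<in> c ! i}"
    using assms by (auto simp: is_cycle_def kneser_adj_def)
qed auto

lemma kneser_odd_cycle_multiplicity: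
  assumes cyc: "is_cycle (kneser_adj (m * (2 * k + 1)) (m * k)) (2 * k + 1) c"
    and x: "x \<in> {1..m * (2 * k + 1)}"
  shows "card {i. i < 2 * k + 1 \<and> x \<in> c ! i} = k"
proof (rule ccontr)
  let ?n = "m * (2 * k + 1)" and ?L = "2 * k + 1"
  define mult where "mult y = card {i \<in> {..<?L}. y \<in> c ! i}" for y
  have mult_le: "mult y \<le> k" for y
    using kneser_cycle_card_edges_avoiding[OF cyc, of y] by (simp add: mult_def)
  assume "card {i. i < ?L \<and> x \<in> c ! i} \<noteq> k"
  with mult_le[of x] have "mult x < k" by (simp add: mult_def)
  have "(\<Sum>y\<in>{1..?n}. mult y) = (\<Sum>i\<in>{..<?L}. m * k)"
    unfolding mult_def
  proof (rule sum_multicount_gen)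
    show "\<forall>i\<in>{..<?L}. card {y \<in> {1..?n}. y \<in> c ! i} = m * k"
    proof
      fix i assume "i \<in> {..<?L}"
      then have "c ! i \<subseteq> {1..?n}" using kneser_cycle_vertex(1)[OF cyc] by simp
      then have "{y \<in> {1..?n}. y \<in> c ! i} = c ! i" by blast
      with kneser_cycle_vertex[OF cyc] \<open>i \<in> {..<?L}\<close> show "card {y \<in> {1..?n}. y \<in> c ! i} = m * k"
        by simp
    qed
  qed auto
  also have "\<dots> = (\<Sum>y\<in>{1..?n}. k)" by (simp add: algebra_simps)
  also have "\<dots> > (\<Sum>y\<in>{1..?n}. mult y)"
    using mult_le \<open>mult x < k\<close> x by (intro sum_strict_mono_ex1) auto
  finally show False by simp
qed

theorem mainTheorem14:
  fixes m k :: nat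
  assumes "m \<ge> 1" and "k \<ge> 1"
  shows "\<exists>D. is_orientation (kneser_adj (m * (2 * k + 1)) (m * k)) D \<and>
           (\<forall>c. is_cycle (kneser_adj (m * (2 * k + 1)) (m * k)) (2 * k + 1) c \<longrightarrow>
                alternating D c)"
proof (intro exI conjI allI impI)
  let ?n = "m * (2 * k + 1)" and ?r = "m * k" and ?L = "2 * k + 1"
  let ?D = "kneser_min_orientation ?n ?r"
  show orientation: "is_orientation (kneser_adj ?n ?r) ?D"
    using assms by (intro is_orientation_kneser_min_orientation) simp
  fix c
  assume cyc: "is_cycle (kneser_adj ?n ?r) ?L c"
  define S where "S = {i. i < ?L \<and> 1 \<in> c ! i}"
  have "card S = k"
    unfolding S_def using assms by (intro kneser_odd_cycle_multiplicity[OF cyc]) simp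
  with kneser_cycle_card_edges_avoiding[OF cyc, of 1]
  have "card (edges_avoiding ?L S) \<le> 1" by (simp add: S_def)
  moreover have "\<forall>e<?L. \<not> (?D (c ! e) (c ! ((e + 1) mod ?L)) \<and> ?D (c ! ((e + 1) mod ?L)) (c ! e))"
    using cyc orientation unfolding is_cycle_def is_orientation_def by blast
  moreover have "\<forall>t\<in>S. \<forall>v. \<not> ?D v (c ! t)"
    by (simp add: S_def kneser_min_orientation_not_into_one)
  moreover have "length c = ?L" using cyc by (simp add: is_cycle_def)
  ultimately show "alternating ?D c"
    by (intro alternating_if_le_one_edge_avoids_sources)
qed

end
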